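(* Let $\mathcal D$ be universal, $\mathrm M=(M,d)\in\mathfrak U_{\mathcal D}$, $A\subseteq M$ finite and nonempty, and $\mathfrak s,\mathfrak t$ Katětov functions of $\mathrm M$ with $\operatorname{dom}(\mathfrak s)=\operatorname{dom}(\mathfrak t)=A$. Then $$d(\mathfrak s,\mathfrak t)=\Big\{m\in\mathcal D:\ \max_{x\in A}|\mathfrak s(x)-\mathfrak t(x)|\le m\le\min_{x\in A}\big(\mathfrak s(x)+\mathfrak t(x)\big)\Big\}.$$
   Context: $\mathcal D$ is a finite subset of $\mathbb R_{\ge0}$ containing $0$. $\mathfrak U_{\mathcal D}$ is the class of countable homogeneous metric spaces (every isometry between finite subspaces extends to an isometry of the space onto itself) with distance set exactly $\mathcal D$ into which every finite metric space with distances in $\mathcal D$ embeds isometrically; $\mathcal D$ is universal if this class is nonempty. A Katětov function of $\mathrm M$ is a map $\mathfrak t:F\to\mathcal D\setminus\{0\}$, $F\subseteq M$ finite, with $|\mathfrak t(x)-\mathfrak t(y)|\le d(x,y)\le\mathfrak t(x)+\mathfrak t(y)$ for all $x,y\in F$; $\operatorname{orb}(\mathfrak t)=\{y\in M\setminus F: d(y,x)=\mathfrak t(x)\ \forall x\in F\}$. For Katětov functions $\mathfrak s,\mathfrak t$: $d(\mathfrak s,\mathfrak t)=\{d(x,y): x\in\operatorname{orb}(\mathfrak s),\ y\in\operatorname{orb}(\mathfrak t)\}$. *)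

theory Defs
  imports "HOL-Analysis.Analysis"
begin

definition dist_set :: "'a set \<Rightarrow> ('a \<Rightarrow> 'a \<Rightarrow> real) \<Rightarrow> real set" where
  "dist_set M d = {d x y | x y. x \<in> M \<and> y \<in> M}"

definition isometry_betw :: "('a \<Rightarrow> 'a \<Rightarrow> real) \<Rightarrow> ('a \<Rightarrow> 'a) \<Rightarrow> 'a set \<Rightarrow> 'a set \<Rightarrow> bool" where
  "isometry_betw d f X Y \<longleftrightarrow> bij_betw f X Y \<and> (\<forall>x\<in>X. \<forall>y\<in>X. d (f x) (f y) = d x y)"

definition homogeneous :: "'a set \<Rightarrow> ('a \<Rightarrow> 'a \<Rightarrow> real) \<Rightarrow> bool" where
  "homogeneous M d \<longleftrightarrow>
     (\<forall>X Y f. X \<subseteq> M \<and> Y \<subseteq> M \<and> finite X \<and> finite Y \<and> isometry_betw d f X Y \<longrightarrow>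
        (\<exists>g. isometry_betw d g M M \<and> (\<forall>x\<in>X. g x = f x)))"

definition isometric_embedding ::
  "'b set \<Rightarrow> ('b \<Rightarrow> 'b \<Rightarrow> real) \<Rightarrow> 'a set \<Rightarrow> ('a \<Rightarrow> 'a \<Rightarrow> real) \<Rightarrow> ('b \<Rightarrow> 'a) \<Rightarrow> bool" where
  "isometric_embedding F e M d h \<longleftrightarrow> h ` F \<subseteq> M \<and> (\<forall>x\<in>F. \<forall>y\<in>F. d (h x) (h y) = e x y)"

text \<open>Every finite metric space with distances in D embeds isometrically into (M,d).
  Finite metric spaces are represented (up to isometry) on finite subsets of nat.\<close>
definition finitely_universal :: "real set \<Rightarrow> 'a set \<Rightarrow> ('a \<Rightarrow> 'a \<Rightarrow> real) \<Rightarrow> bool" where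
  "finitely_universal D M d \<longleftrightarrow>
     (\<forall>(F::nat set) e. finite F \<and> Metric_space F e \<and> dist_set F e \<subseteq> D \<longrightarrow>
        (\<exists>h. isometric_embedding F e M d h))"

definition in_U :: "real set \<Rightarrow> 'a set \<Rightarrow> ('a \<Rightarrow> 'a \<Rightarrow> real) \<Rightarrow> bool" where
  "in_U D M d \<longleftrightarrow> Metric_space M d \<and> countable M \<and> homogeneous M d \<and>
      dist_set M d = D \<and> finitely_universal D M d"

text \<open>D is universal: D is a finite subset of the nonnegative reals containing 0, and U_D is
  nonempty (witnesses are countable, so carriers in nat suffice).\<close>
definition universal_dist_set :: "real set \<Rightarrow> bool" where
  "universal_dist_set D \<longleftrightarrow> finite D \<and> 0 \<in> D \<and> (\<forall>r\<in>D. r \<ge> 0) \<and>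
      (\<exists>(M::nat set) d. in_U D M d)"

text \<open>Katetov function t with domain F (values outside F are irrelevant).\<close>
definition katetov :: "'a set \<Rightarrow> ('a \<Rightarrow> 'a \<Rightarrow> real) \<Rightarrow> real set \<Rightarrow> 'a set \<Rightarrow> ('a \<Rightarrow> real) \<Rightarrow> bool" where
  "katetov M d D F t \<longleftrightarrow> F \<subseteq> M \<and> finite F \<and> (\<forall>x\<in>F. t x \<in> D - {0}) \<and>
      (\<forall>x\<in>F. \<forall>y\<in>F. \<bar>t x - t y\<bar> \<le> d x y \<and> d x y \<le> t x + t y)"

definition orb :: "'a set \<Rightarrow> ('a \<Rightarrow> 'a \<Rightarrow> real) \<Rightarrow> 'a set \<Rightarrow> ('a \<Rightarrow> real) \<Rightarrow> 'a set" where
  "orb M d F t = {y \<in> M - F. \<forall>x\<in>F. d y x = t x}"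

definition kdist :: "'a set \<Rightarrow> ('a \<Rightarrow> 'a \<Rightarrow> real) \<Rightarrow> 'a set \<Rightarrow> ('a \<Rightarrow> real) \<Rightarrow> 'a set \<Rightarrow> ('a \<Rightarrow> real) \<Rightarrow> real set" where
  "kdist M d F s G t = {d x y | x y. x \<in> orb M d F s \<and> y \<in> orb M d G t}"

end

theory Submission
  imports Defs
begin

(* The inclusion "<=" is the triangle inequality in M (kdist_within_bounds).  For ">=" and
   m > 0 we build the abstract metric space A + {p, q} in which p realises s, q realises t
   and d(p,q) = m (two_point_extension); the bounds on m are exactly what makes it a metric
   space with distances in D.  By finite universality it embeds into M, and homogeneity
   moves the embedded copy of A back onto A itself, so the preimages of p and q lie in the
   orbits of s and t at distance m (katetov_pair_realised).  The case m = 0 forces s = t on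
   A and reduces to the orbit of s being nonempty, which is the special case t = s of the
   same construction (katetov_orbit_nonempty). *)

text \<open>Finite universality, stated on the nat-indexed representatives, transfers to finite
  metric spaces on an arbitrary carrier type by enumerating the carrier.\<close>
lemma finitely_universal_embeds:
  fixes X :: "'b set" and e :: "'b \<Rightarrow> 'b \<Rightarrow> real"
  assumes fu: "finitely_universal D M d" and fin: "finite X" and ms: "Metric_space X e"
    and ds: "dist_set X e \<subseteq> D"
  obtains h where "h ` X \<subseteq> M" and "\<forall>x\<in>X. \<forall>y\<in>X. d (h x) (h y) = e x y"
proof -
  interpret X: Metric_space X e by (rule ms)
  define N where "N = {0..<card X}"
  obtain g where g: "bij_betw g N X" using ex_bij_betw_nat_finite[OF fin] N_def by blast
  define e' where "e' i j = e (g i) (g j)" for i j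
  have gX: "g i \<in> X" if "i \<in> N" for i using g that bij_betwE by blast
  have inj: "inj_on g N" using g bij_betw_def by blast
  have "Metric_space N e'"
  proof
    fix x y z
    show "0 \<le> e' x y" "e' x y = e' y x" unfolding e'_def by (simp_all add: X.commute)
    show "e' x y = 0 \<longleftrightarrow> x = y" if "x \<in> N" "y \<in> N"
      using that gX inj unfolding e'_def by (metis X.zero inj_on_def)
    show "e' x z \<le> e' x y + e' y z" if "x \<in> N" "y \<in> N" "z \<in> N"
      using that gX unfolding e'_def by (simp add: X.triangle)
  qed
  moreover have "dist_set N e' \<subseteq> D" using ds gX unfolding dist_set_def e'_def by blast
  ultimately obtain h where h: "isometric_embedding N e' M d h"
    using fu fin unfolding finitely_universal_def N_def by blast
  have inv: "inv_into N g x \<in> N" "g (inv_into N g x) = x" if "x \<in> X" for x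
    using g that by (metis bij_betw_def inv_into_into, metis bij_betw_def f_inv_into_f)
  show ?thesis
  proof
    show "(h \<circ> inv_into N g) ` X \<subseteq> M" using h inv unfolding isometric_embedding_def by auto
    show "\<forall>x\<in>X. \<forall>y\<in>X. d ((h \<circ> inv_into N g) x) ((h \<circ> inv_into N g) y) = e x y"
    proof (intro ballI)
      fix x y assume "x \<in> X" "y \<in> X"
      then show "d ((h \<circ> inv_into N g) x) ((h \<circ> inv_into N g) y) = e x y"
        using h inv[of x] inv[of y] unfolding isometric_embedding_def e'_def by simp
    qed
  qed
qed

lemma homogeneous_extend_isometry:
  assumes ms: "Metric_space M d" and hom: "homogeneous M d"
    and AM: "A \<subseteq> M" and fin: "finite A" and \<phi>M: "\<phi> ` A \<subseteq> M"
    and \<phi>: "\<forall>a\<in>A. \<forall>b\<in>A. d (\<phi> a) (\<phi> b) = d a b"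
  obtains g where "g ` M = M" and "\<forall>x\<in>M. \<forall>y\<in>M. d (g x) (g y) = d x y"
    and "\<forall>a\<in>A. g a = \<phi> a"
proof -
  interpret M: Metric_space M d by (rule ms)
  have "inj_on \<phi> A"
  proof (rule inj_onI)
    fix a b assume ab: "a \<in> A" "b \<in> A" "\<phi> a = \<phi> b"
    then have "d a b = 0" using \<phi> \<phi>M by (metis M.zero image_subset_iff)
    then show "a = b" using ab AM by (meson M.zero subsetD)
  qed
  then have "isometry_betw d \<phi> A (\<phi> ` A)"
    unfolding isometry_betw_def using \<phi> by (simp add: bij_betw_imageI)
  then obtain g where "isometry_betw d g M M" "\<forall>a\<in>A. g a = \<phi> a"
    using hom[unfolded homogeneous_def, rule_format, of A "\<phi> ` A" \<phi>] AM \<phi>M fin by blast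
  then show ?thesis using that unfolding isometry_betw_def bij_betw_def by blast
qed

text \<open>The absolute
  values only make the function nonnegative everywhere, as Metric_space demands; on the
  intended data they are vacuous.\<close>
definition two_point_extension ::
  "('a \<Rightarrow> 'a \<Rightarrow> real) \<Rightarrow> ('a \<Rightarrow> real) \<Rightarrow> ('a \<Rightarrow> real) \<Rightarrow> real \<Rightarrow> 'a + bool \<Rightarrow> 'a + bool \<Rightarrow> real"
where
  "two_point_extension d s t m u v = (case (u, v) of
     (Inl a, Inl b) \<Rightarrow> d a b
   | (Inl a, Inr c) \<Rightarrow> (if c then \<bar>s a\<bar> else \<bar>t a\<bar>)
   | (Inr c, Inl a) \<Rightarrow> (if c then \<bar>s a\<bar> else \<bar>t a\<bar>)
   | (Inr b, Inr c) \<Rightarrow> (if b = c then 0 else \<bar>m\<bar>))"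

locale two_point_data = Metric_space M d
  for M :: "'a set" and d :: "'a \<Rightarrow> 'a \<Rightarrow> real" +
  fixes A :: "'a set" and s t :: "'a \<Rightarrow> real" and m :: real
  assumes A_sub: "A \<subseteq> M" and m_pos: "m > 0"
    and pos: "\<And>a. a \<in> A \<Longrightarrow> s a > 0 \<and> t a > 0"
    and kat_s: "\<And>a b. a \<in> A \<Longrightarrow> b \<in> A \<Longrightarrow> \<bar>s a - s b\<bar> \<le> d a b \<and> d a b \<le> s a + s b"
    and kat_t: "\<And>a b. a \<in> A \<Longrightarrow> b \<in> A \<Longrightarrow> \<bar>t a - t b\<bar> \<le> d a b \<and> d a b \<le> t a + t b"
    and bnd: "\<And>a. a \<in> A \<Longrightarrow> \<bar>s a - t a\<bar> \<le> m \<and> m \<le> s a + t a"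
begin

abbreviation E where "E \<equiv> two_point_extension d s t m"

abbreviation f :: "bool \<Rightarrow> 'a \<Rightarrow> real" where "f c \<equiv> if c then s else t"

lemma E_old: "E (Inl a) (Inl b) = d a b"
  unfolding two_point_extension_def by simp

lemma E_point: "a \<in> A \<Longrightarrow> E (Inl a) (Inr c) = f c a \<and> E (Inr c) (Inl a) = f c a"
  using pos unfolding two_point_extension_def by force

lemma E_new: "E (Inr b) (Inr c) = (if b = c then 0 else m)"
  using m_pos unfolding two_point_extension_def by simp

lemma kat_f: "a \<in> A \<Longrightarrow> b \<in> A \<Longrightarrow> \<bar>f c a - f c b\<bar> \<le> d a b \<and> d a b \<le> f c a + f c b"
  using kat_s kat_t by simp

lemma bnd_f:
  assumes "a \<in> A"
  shows "\<bar>f b a - f c a\<bar> \<le> E (Inr b) (Inr c) \<and> E (Inr b) (Inr c) \<le> f b a + f c a"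
  using bnd[OF assms] pos[OF assms] m_pos by (auto simp: E_new abs_le_iff)

text \<open>Triangles with two old points use the Katetov inequalities, triangles with two new
  points use the bounds on m.\<close>
lemma E_triangle:
  assumes "x \<in> Inl ` A \<union> range Inr" "y \<in> Inl ` A \<union> range Inr" "z \<in> Inl ` A \<union> range Inr"
  shows "E x z \<le> E x y + E y z"
  using assms
proof (elim UnE imageE rangeE)
  fix a b c assume xyz: "x = Inl a" "y = Inl b" "z = Inl c" and abc: "a \<in> A" "b \<in> A" "c \<in> A"
  have "a \<in> M" "b \<in> M" "c \<in> M" using A_sub abc by auto
  then show ?thesis using xyz triangle[of a b c] by (simp add: E_old)
next
  fix a b c assume "x = Inl a" "y = Inl b" "z = Inr c" "a \<in> A" "b \<in> A"
  then show ?thesis using kat_f[of a b c] E_point E_old by (simp add: abs_le_iff)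
next
  fix a b c assume "x = Inl a" "y = Inr b" "z = Inl c" "a \<in> A" "c \<in> A"
  then show ?thesis using kat_f[of a c b] E_point E_old by simp
next
  fix a b c assume "x = Inr a" "y = Inl b" "z = Inl c" "b \<in> A" "c \<in> A"
  then show ?thesis using kat_f[of b c a] E_point E_old by (simp add: abs_le_iff)
next
  fix a b c assume "x = Inl a" "y = Inr b" "z = Inr c" "a \<in> A"
  then show ?thesis using bnd_f[of a b c] E_point by (simp add: abs_le_iff)
next
  fix a b c assume "x = Inr a" "y = Inr b" "z = Inl c" "c \<in> A"
  then show ?thesis using bnd_f[of c a b] E_point by (simp add: abs_le_iff)
next
  fix a b c assume "x = Inr a" "y = Inl b" "z = Inr c" "b \<in> A"
  then show ?thesis using bnd_f[of b a c] E_point by simp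
next
  fix a b c assume "x = Inr a" "y = Inr b" "z = Inr c"
  then show ?thesis using m_pos by (simp add: E_new)
qed

lemma two_point_extension_metric: "Metric_space (Inl ` A \<union> range Inr) E"
proof
  fix x y z
  show "0 \<le> E x y" "E x y = E y x"
    unfolding two_point_extension_def by (auto split: sum.splits simp: commute)
  show "E x y = 0 \<longleftrightarrow> x = y" if "x \<in> Inl ` A \<union> range Inr" "y \<in> Inl ` A \<union> range Inr"
    using that
  proof (elim UnE imageE rangeE)
    fix a b assume "x = Inl a" "y = Inl b" "a \<in> A" "b \<in> A"
    then show ?thesis using A_sub zero[of a b] by (simp add: E_old subset_iff)
  next
    fix a b assume "x = Inl a" "y = Inr b" "a \<in> A"
    then show ?thesis using E_point[of a] pos[of a] by auto
  next
    fix a b assume "x = Inr a" "y = Inl b" "b \<in> A"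
    then show ?thesis using E_point[of b] pos[of b] by auto
  qed (use m_pos in \<open>simp add: E_new\<close>)
  show "E x z \<le> E x y + E y z"
    if "x \<in> Inl ` A \<union> range Inr" "y \<in> Inl ` A \<union> range Inr" "z \<in> Inl ` A \<union> range Inr"
    using that by (rule E_triangle)
qed

end

lemma two_point_extension_dist_set:
  assumes dA: "\<And>a b. a \<in> A \<Longrightarrow> b \<in> A \<Longrightarrow> d a b \<in> D"
    and st: "\<And>a. a \<in> A \<Longrightarrow> s a \<in> D \<and> t a \<in> D \<and> s a \<ge> 0 \<and> t a \<ge> 0"
    and "m \<in> D" "m \<ge> 0" "0 \<in> D"
  shows "dist_set (Inl ` A \<union> range Inr) (two_point_extension d s t m) \<subseteq> D"
  using assms unfolding dist_set_def two_point_extension_def by auto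

lemma katetov_values:
  assumes "in_U D M d" "katetov M d D A s" "a \<in> A"
  shows "s a \<in> D" "s a > 0"
proof -
  have "s a \<in> dist_set M d" "s a \<noteq> 0"
    using assms unfolding in_U_def katetov_def by auto
  moreover have "r \<ge> 0" if "r \<in> dist_set M d" for r
    using that assms(1) Metric_space.nonneg unfolding in_U_def dist_set_def by fastforce
  ultimately show "s a \<in> D" "s a > 0" using assms unfolding in_U_def by force+
qed

lemma two_point_extension_embeds:
  assumes U: "in_U D M d" and AM: "A \<subseteq> M" and fin: "finite A"
    and ks: "katetov M d D A s" and kt: "katetov M d D A t"
    and mD: "m \<in> D" and mpos: "m > 0" and zD: "0 \<in> D"
    and bnd: "\<And>a. a \<in> A \<Longrightarrow> \<bar>s a - t a\<bar> \<le> m \<and> m \<le> s a + t a"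
  obtains h where "h ` (Inl ` A \<union> range Inr) \<subseteq> M"
    and "\<forall>u\<in>Inl ` A \<union> range Inr. \<forall>v\<in>Inl ` A \<union> range Inr.
           d (h u) (h v) = two_point_extension d s t m u v"
proof -
  have ms: "Metric_space M d" and dsM: "dist_set M d = D" and fu: "finitely_universal D M d"
    using U unfolding in_U_def by auto
  let ?X = "Inl ` A \<union> range (Inr :: bool \<Rightarrow> 'a + bool)" and ?E = "two_point_extension d s t m"
  have pos: "s a > 0 \<and> t a > 0" "s a \<in> D \<and> t a \<in> D" if "a \<in> A" for a
    using katetov_values[OF U ks that] katetov_values[OF U kt that] by auto
  have kat_s: "\<bar>s a - s b\<bar> \<le> d a b \<and> d a b \<le> s a + s b" if "a \<in> A" "b \<in> A" for a b
    using ks that unfolding katetov_def by blast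
  have kat_t: "\<bar>t a - t b\<bar> \<le> d a b \<and> d a b \<le> t a + t b" if "a \<in> A" "b \<in> A" for a b
    using kt that unfolding katetov_def by blast
  have "two_point_data M d A s t m"
    using two_point_data_axioms.intro[OF AM mpos pos(1) kat_s kat_t bnd]
    by (rule two_point_data.intro[OF ms])
  then have "Metric_space ?X ?E" by (rule two_point_data.two_point_extension_metric)
  moreover have "dist_set ?X ?E \<subseteq> D"
  proof (rule two_point_extension_dist_set)
    show "d a b \<in> D" if "a \<in> A" "b \<in> A" for a b
      using that AM dsM unfolding dist_set_def by blast
    show "s a \<in> D \<and> t a \<in> D \<and> s a \<ge> 0 \<and> t a \<ge> 0" if "a \<in> A" for a
      using pos[OF that] by simp
    show "m \<in> D" "m \<ge> 0" "0 \<in> D" using mD mpos zD by simp_all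
  qed
  moreover have "finite ?X" by (intro finite_UnI finite_imageI) (simp_all add: fin UNIV_bool)
  ultimately show ?thesis using finitely_universal_embeds[OF fu] that by metis
qed

text \<open>Homogeneity moves the embedded copy of A
  back onto A; the preimages of the two new points then lie in the two orbits.\<close>
lemma katetov_pair_realised:
  assumes U: "in_U D M d" and AM: "A \<subseteq> M" and fin: "finite A"
    and ks: "katetov M d D A s" and kt: "katetov M d D A t"
    and mD: "m \<in> D" and mpos: "m > 0" and zD: "0 \<in> D"
    and bnd: "\<And>a. a \<in> A \<Longrightarrow> \<bar>s a - t a\<bar> \<le> m \<and> m \<le> s a + t a"
  obtains x y where "x \<in> orb M d A s" "y \<in> orb M d A t" "d x y = m"
proof -
  have ms: "Metric_space M d" and hom: "homogeneous M d" using U unfolding in_U_def by auto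
  interpret M: Metric_space M d by (rule ms)
  let ?X = "Inl ` A \<union> range (Inr :: bool \<Rightarrow> 'a + bool)" and ?E = "two_point_extension d s t m"
  let ?f = "\<lambda>c. if c then s else t"
  obtain h where hM: "h ` ?X \<subseteq> M" and h: "\<forall>u\<in>?X. \<forall>v\<in>?X. d (h u) (h v) = ?E u v"
    using two_point_extension_embeds[OF U AM fin ks kt mD mpos zD bnd] by blast
  have h_A: "\<forall>a\<in>A. \<forall>b\<in>A. d (h (Inl a)) (h (Inl b)) = d a b"
    using h by (simp add: two_point_extension_def)
  have "(\<lambda>a. h (Inl a)) ` A \<subseteq> M" using hM by auto
  then obtain g where g_onto: "g ` M = M" and g_iso: "\<forall>x\<in>M. \<forall>y\<in>M. d (g x) (g y) = d x y"
      and g_A: "\<forall>a\<in>A. g a = h (Inl a)"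
    using homogeneous_extend_isometry[OF ms hom AM fin _ h_A] by blast
  have realise: "\<exists>x\<in>M. g x = h (Inr c) \<and> x \<in> orb M d A (?f c)" for c
  proof -
    have "h (Inr c) \<in> M" using hM by auto
    then obtain x where x: "x \<in> M" "g x = h (Inr c)" using g_onto by (metis imageE)
    have dist: "d x a = ?f c a" if a: "a \<in> A" for a
    proof -
      have "d x a = d (g x) (g a)" using g_iso x(1) AM a by (simp add: subset_iff)
      also have "\<dots> = ?E (Inr c) (Inl a)" using x(2) g_A h a by simp
      finally show ?thesis using katetov_values[OF U ks a] katetov_values[OF U kt a]
        unfolding two_point_extension_def by simp
    qed
    have "x \<notin> A"
    proof
      assume "x \<in> A"
      then have "d x x > 0" using dist katetov_values(2)[OF U ks] katetov_values(2)[OF U kt] by simp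
      then show False using x(1) by simp
    qed
    then show ?thesis using x dist unfolding orb_def by auto
  qed
  obtain x y where x: "g x = h (Inr True)" "x \<in> orb M d A s" "x \<in> M"
    and y: "g y = h (Inr False)" "y \<in> orb M d A t" "y \<in> M"
    using realise[of True] realise[of False] by auto
  have "Inr True \<in> ?X" "Inr False \<in> ?X" by (blast intro: rangeI)+
  then have "d x y = ?E (Inr True) (Inr False)" using g_iso x y h by metis
  also have "\<dots> = m" using mpos by (simp add: two_point_extension_def)
  finally show ?thesis using that x y by blast
qed

text \<open>The orbit of a Katetov function with finite nonempty domain is nonempty: apply the
  previous lemma with t = s and m the least value of s.\<close>
lemma katetov_orbit_nonempty:
  assumes U: "in_U D M d" and AM: "A \<subseteq> M" and fin: "finite A" and ne: "A \<noteq> {}"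
    and ks: "katetov M d D A s" and zD: "0 \<in> D"
  obtains x where "x \<in> orb M d A s"
proof -
  define q where "q = Min (s ` A)"
  have "q \<in> s ` A" unfolding q_def using fin ne by (intro Min_in) auto
  then have "q \<in> D" "q > 0" using katetov_values[OF U ks] by auto
  moreover have "\<bar>s a - s a\<bar> \<le> q \<and> q \<le> s a + s a" if "a \<in> A" for a
  proof -
    have "q \<le> s a" unfolding q_def using fin that by simp
    then show ?thesis using \<open>q > 0\<close> by simp
  qed
  ultimately show ?thesis using katetov_pair_realised[OF U AM fin ks ks] zD that by metis
qed

lemma kdist_within_bounds:
  assumes ms: "Metric_space M d" and AM: "A \<subseteq> M" and r: "r \<in> kdist M d A s A t"
  shows "r \<in> dist_set M d \<and> (\<forall>a\<in>A. \<bar>s a - t a\<bar> \<le> r \<and> r \<le> s a + t a)"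
proof -
  interpret M: Metric_space M d by (rule ms)
  obtain x y where xy: "r = d x y" "x \<in> orb M d A s" "y \<in> orb M d A t"
    using r unfolding kdist_def by auto
  then have "x \<in> M" "y \<in> M" unfolding orb_def by auto
  moreover have "\<bar>s a - t a\<bar> \<le> r \<and> r \<le> s a + t a" if "a \<in> A" for a
  proof -
    have "d x a = s a" "d y a = t a" "a \<in> M" using xy that AM unfolding orb_def by auto
    then show ?thesis using M.triangle[of x y a] M.triangle[of y x a] M.triangle[of x a y]
        M.commute[of x y] M.commute[of a y] xy(1) \<open>x \<in> M\<close> \<open>y \<in> M\<close> by auto
  qed
  ultimately show ?thesis using xy(1) unfolding dist_set_def by auto
qed

text \<open>For m > 0 this is
  katetov_pair_realised; m = 0 forces s = t on A, and then any point of the (nonempty)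
  orbit of s realises distance 0 with itself.\<close>
lemma bounds_realised:
  assumes U: "in_U D M d" and AM: "A \<subseteq> M" and fin: "finite A" and ne: "A \<noteq> {}"
    and ks: "katetov M d D A s" and kt: "katetov M d D A t" and zD: "0 \<in> D"
    and mD: "m \<in> D" and bnd: "\<forall>a\<in>A. \<bar>s a - t a\<bar> \<le> m \<and> m \<le> s a + t a"
  shows "m \<in> kdist M d A s A t"
proof (cases "m > 0")
  case True
  then show ?thesis using katetov_pair_realised[OF U AM fin ks kt mD True zD] bnd
    unfolding kdist_def by blast
next
  case False
  obtain a0 where "a0 \<in> A" using ne by blast
  then have "m = 0" using False bnd by (meson abs_ge_zero order_trans not_less antisym)
  then have "orb M d A s = orb M d A t" using bnd unfolding orb_def by auto
  moreover obtain x where x: "x \<in> orb M d A s" using katetov_orbit_nonempty[OF U AM fin ne ks zD] .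
  moreover have "d x x = 0" using x U unfolding orb_def in_U_def by (auto simp: Metric_space.zero)
  ultimately have "m = d x x \<and> x \<in> orb M d A s \<and> x \<in> orb M d A t" using \<open>m = 0\<close> by simp
  then show ?thesis unfolding kdist_def by blast
qed

theorem lemma4p1:
  fixes D :: "real set" and M :: "'a set" and d :: "'a \<Rightarrow> 'a \<Rightarrow> real"
    and A :: "'a set" and s t :: "'a \<Rightarrow> real"
  assumes "universal_dist_set D"
    and "in_U D M d"
    and "A \<subseteq> M" and "finite A" and "A \<noteq> {}"
    and "katetov M d D A s" and "katetov M d D A t"
  shows "kdist M d A s A t =
    {m \<in> D. Max ((\<lambda>x. \<bar>s x - t x\<bar>) ` A) \<le> m \<and> m \<le> Min ((\<lambda>x. s x + t x) ` A)}"
proof -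
  have ms: "Metric_space M d" and dsM: "dist_set M d = D" using assms(2) unfolding in_U_def by auto
  have zD: "0 \<in> D" using assms(1) unfolding universal_dist_set_def by simp
  have bounds: "Max ((\<lambda>x. \<bar>s x - t x\<bar>) ` A) \<le> m \<and> m \<le> Min ((\<lambda>x. s x + t x) ` A) \<longleftrightarrow>
      (\<forall>a\<in>A. \<bar>s a - t a\<bar> \<le> m \<and> m \<le> s a + t a)" for m
    using assms(4,5) by auto
  have "kdist M d A s A t = {m \<in> D. \<forall>a\<in>A. \<bar>s a - t a\<bar> \<le> m \<and> m \<le> s a + t a}"
  proof (intro set_eqI iffI)
    fix m assume "m \<in> kdist M d A s A t"
    then show "m \<in> {m \<in> D. \<forall>a\<in>A. \<bar>s a - t a\<bar> \<le> m \<and> m \<le> s a + t a}"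
      using kdist_within_bounds[OF ms assms(3)] dsM by simp
  qed (use bounds_realised[OF assms(2-7) zD] in blast)
  then show ?thesis by (simp add: bounds)
qed

end
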